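(* Assume the abstract framework described in the context. Let $f\in\mathcal{D}_2$. Then the element $$\mathbf{D}^{B}_\Omega f := -F|_\Omega + \big(\Pi^L(L(\mathbf{1}_\Omega F))\big)|_\Omega\in\mathcal{H}_2^\Omega$$ does not depend on the choice of $F\in\mathcal{H}_2$ with $\operatorname{Tr}_2F=f$; likewise $\mathbf{D}^{B}_{\mathcal{C}} f := -F|_{\mathcal{C}} + \big(\Pi^L(L(\mathbf{1}_{\mathcal{C}} F))\big)|_{\mathcal{C}}\in\mathcal{H}_2^{\mathcal{C}}$ does not depend on this choice. Moreover, for all $f\in\mathcal{D}_2$ and $g\in\mathcal{N}_2$, $$\|\mathbf{D}^{B}_\Omega f\|_{\mathcal{H}_2^\Omega}\le \frac{\|B^{\mathcal{C}}\|}{\lambda}\|f\|_{\mathcal{D}_2},\qquad \|\mathbf{D}^{B}_{\mathcal{C}} f\|_{\mathcal{H}_2^{\mathcal{C}}}\le \frac{\|B^{\Omega}\|}{\lambda}\|f\|_{\mathcal{D}_2},\qquad \|\mathbf{S}^L_\Omega g\|_{\mathcal{H}_2}\le \frac{1}{\lambda}\|g\|_{\mathcal{N}_2},$$ where $\|B^\Omega\|$, $\|B^{\mathcal C}\|$ denote the bounds (norms) of the bounded bilinear forms $B^\Omega$, $B^{\mathcal C}$.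
   Context: Abstract framework. Let $\mathcal{H}_1,\mathcal{H}_2$ be complex Hilbert spaces, and for $j=1,2$ let $\widehat{\mathcal{H}}_j^\Omega$, $\widehat{\mathcal{H}}_j^{\mathcal{C}}$, $\widehat{\mathcal{D}}_j$ be normed (or seminormed) vector spaces. We are given bounded linear operators $\operatorname{Tr}_j:\mathcal{H}_j\to\widehat{\mathcal{D}}_j$ and bounded linear "restriction" operators $F\mapsto F|_\Omega$ from $\mathcal{H}_j$ to $\widehat{\mathcal{H}}_j^\Omega$ and $F\mapsto F|_{\mathcal{C}}$ from $\mathcal{H}_j$ to $\widehat{\mathcal{H}}_j^{\mathcal{C}}$. Define $\mathcal{H}_j^\Omega=\{F|_\Omega:F\in\mathcal{H}_j\}$ with norm $\|f\|_{\mathcal{H}_j^\Omega}=\inf\{\|F\|_{\mathcal{H}_j}:F|_\Omega=f\}$, similarly $\mathcal{H}_j^{\mathcal{C}}$, and $\mathcal{D}_j=\{\operatorname{Tr}_jF:F\in\mathcal{H}_j\}$ with norm $\|f\|_{\mathcal{D}_j}=\inf\{\|F\|_{\mathcal{H}_j}:\operatorname{Tr}_jF=f\}$ (each modulo elements of norm zero). Let $\mathcal{N}_2=\mathcal{D}_1^*$ and $\mathcal{N}_1=\mathcal{D}_2^*$ be the dual spaces, $\langle\cdot,\cdot\rangle$ denoting duality pairings. We are given bounded bilinear forms $B:\mathcal{H}_1\times\mathcal{H}_2\to\mathbb{C}$, $B^\Omega:\mathcal{H}_1^\Omega\times\mathcal{H}_2^\Omega\to\mathbb{C}$, $B^{\mathcal{C}}:\mathcal{H}_1^{\mathcal{C}}\times\mathcal{H}_2^{\mathcal{C}}\to\mathbb{C}$,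 and there is $\lambda>0$ such that for all $u\in\mathcal{H}_1$, $v\in\mathcal{H}_2$, and all $\varphi,\psi\in\mathcal{H}_j$ ($j\in\{1,2\}$): (i) $\sup_{w\in\mathcal{H}_1\setminus\{0\}}|B(w,v)|/\|w\|_{\mathcal{H}_1}\ge\lambda\|v\|_{\mathcal{H}_2}$ and $\sup_{w\in\mathcal{H}_2\setminus\{0\}}|B(u,w)|/\|w\|_{\mathcal{H}_2}\ge\lambda\|u\|_{\mathcal{H}_1}$; (ii) $B(u,v)=B^\Omega(u|_\Omega,v|_\Omega)+B^{\mathcal{C}}(u|_{\mathcal{C}},v|_{\mathcal{C}})$; (iii) if $\operatorname{Tr}_j\varphi=\operatorname{Tr}_j\psi$ then there is $w\in\mathcal{H}_j$ with $w|_\Omega=\varphi|_\Omega$, $w|_{\mathcal{C}}=\psi|_{\mathcal{C}}$ and $\operatorname{Tr}_jw=\operatorname{Tr}_j\varphi$. Definitions: for $u\in\mathcal{H}_2$, $Lu\in\mathcal{H}_1^*$ is given by $\langle\varphi,Lu\rangle=B(\varphi,u)$. For $u\in\mathcal{H}_2^\Omega$, $L(u\mathbf{1}_\Omega)\in\mathcal{H}_1^*$ is given by $\langle\varphi,L(u\mathbf{1}_\Omega)\rangle=B^\Omega(\varphi|_\Omega,u)$ for all $\varphi\in\mathcal{H}_1$; for $F\in\mathcal H_2$, $L(\mathbf 1_\Omega F)$ means $L(F|_\Omega\mathbf 1_\Omega)$; analogously $L(u\mathbf{1}_{\mathcal{C}})$ with $B^{\mathcal{C}}$. Newton potential: for $H\in\mathcal{H}_1^*$,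 $\Pi^LH$ is the unique element of $\mathcal{H}_2$ with $B(\varphi,\Pi^LH)=\langle\varphi,H\rangle$ for all $\varphi\in\mathcal{H}_1$ (it exists uniquely by the Babuška–Lax–Milgram theorem). Single layer potential: for $g\in\mathcal{N}_2$, $\mathbf{S}^L_\Omega g$ is the unique element of $\mathcal{H}_2$ with $B(\varphi,\mathbf{S}^L_\Omega g)=\langle\operatorname{Tr}_1\varphi,g\rangle$ for all $\varphi\in\mathcal{H}_1$. *)

theory Defs
  imports "HOL-Analysis.Analysis"
begin

class complex_vector = real_vector +
  fixes scaleC :: "complex \<Rightarrow> 'a \<Rightarrow> 'a"
  assumes scaleC_add_right: "scaleC a (x + y) = scaleC a x + scaleC a y"
    and scaleC_add_left: "scaleC (a + b) x = scaleC a x + scaleC b x"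
    and scaleC_scaleC: "scaleC a (scaleC b x) = scaleC (a * b) x"
    and scaleC_one: "scaleC 1 x = x"
    and scaleR_scaleC: "scaleR r x = scaleC (complex_of_real r) x"

instantiation complex :: complex_vector
begin
definition scaleC_complex_def: "scaleC a (z::complex) = a * z"
instance
  by standard (auto simp: scaleC_complex_def algebra_simps scaleR_conv_of_real)
end

class complex_inner = complex_vector + real_normed_vector +
  fixes cinner :: "'a \<Rightarrow> 'a \<Rightarrow> complex"
  assumes cinner_add_left: "cinner (x + y) z = cinner x z + cinner y z"
    and cinner_scaleC_left: "cinner (scaleC a x) y = a * cinner x y"
    and cinner_commute: "cinner x y = cnj (cinner y x)"
    and norm_eq_sqrt_cinner: "norm x = sqrt (Re (cinner x x))"

class chilbert_space = complex_inner + complete_space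

definition clinear :: "('a::complex_vector \<Rightarrow> 'b::complex_vector) \<Rightarrow> bool" where
  "clinear f \<longleftrightarrow> (\<forall>x y. f (x + y) = f x + f y) \<and> (\<forall>c x. f (scaleC c x) = scaleC c (f x))"

definition seminorm :: "('a::complex_vector \<Rightarrow> real) \<Rightarrow> bool" where
  "seminorm N \<longleftrightarrow> (\<forall>x y. N (x + y) \<le> N x + N y) \<and> (\<forall>c x. N (scaleC c x) = cmod c * N x)"

definition bounded_clinear_into :: "('b::complex_vector \<Rightarrow> real) \<Rightarrow> ('a::{complex_vector,real_normed_vector} \<Rightarrow> 'b) \<Rightarrow> bool" where
  "bounded_clinear_into N T \<longleftrightarrow> clinear T \<and> (\<exists>K. \<forall>x. N (T x) \<le> K * norm x)"

definition qnorm :: "('a::real_normed_vector \<Rightarrow> 'b) \<Rightarrow> 'b \<Rightarrow> real" where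
  "qnorm T y = Inf {norm F | F. T F = y}"

definition bilinear_on :: "'a::complex_vector set \<Rightarrow> 'b::complex_vector set \<Rightarrow> ('a \<Rightarrow> 'b \<Rightarrow> complex) \<Rightarrow> bool" where
  "bilinear_on A C f \<longleftrightarrow>
     (\<forall>u\<in>A. \<forall>u'\<in>A. \<forall>v\<in>C. f (u + u') v = f u v + f u' v) \<and>
     (\<forall>u\<in>A. \<forall>v\<in>C. \<forall>c. f (scaleC c u) v = c * f u v) \<and>
     (\<forall>u\<in>A. \<forall>v\<in>C. \<forall>v'\<in>C. f u (v + v') = f u v + f u v') \<and>
     (\<forall>u\<in>A. \<forall>v\<in>C. \<forall>c. f u (scaleC c v) = c * f u v)"

definition bilin_bounded :: "'a set \<Rightarrow> 'b set \<Rightarrow> ('a \<Rightarrow> real) \<Rightarrow> ('b \<Rightarrow> real) \<Rightarrow> ('a \<Rightarrow> 'b \<Rightarrow> complex) \<Rightarrow> bool" where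
  "bilin_bounded A C nA nC f \<longleftrightarrow> (\<exists>K. \<forall>u\<in>A. \<forall>v\<in>C. cmod (f u v) \<le> K * nA u * nC v)"

definition bilin_norm :: "'a set \<Rightarrow> 'b set \<Rightarrow> ('a \<Rightarrow> real) \<Rightarrow> ('b \<Rightarrow> real) \<Rightarrow> ('a \<Rightarrow> 'b \<Rightarrow> complex) \<Rightarrow> real" where
  "bilin_norm A C nA nC f = Inf {K. 0 \<le> K \<and> (\<forall>u\<in>A. \<forall>v\<in>C. cmod (f u v) \<le> K * nA u * nC v)}"

definition in_dual :: "'a::complex_vector set \<Rightarrow> ('a \<Rightarrow> real) \<Rightarrow> ('a \<Rightarrow> complex) \<Rightarrow> bool" where
  "in_dual D nD g \<longleftrightarrow>
     (\<forall>x\<in>D. \<forall>y\<in>D. g (x + y) = g x + g y) \<and> (\<forall>x\<in>D. \<forall>c. g (scaleC c x) = c * g x) \<and>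
     (\<exists>K. \<forall>x\<in>D. cmod (g x) \<le> K * nD x)"

definition dual_norm :: "'a set \<Rightarrow> ('a \<Rightarrow> real) \<Rightarrow> ('a \<Rightarrow> complex) \<Rightarrow> real" where
  "dual_norm D nD g = Inf {K. 0 \<le> K \<and> (\<forall>x\<in>D. cmod (g x) \<le> K * nD x)}"

definition newton_pot :: "('h1 \<Rightarrow> 'h2 \<Rightarrow> complex) \<Rightarrow> ('h1 \<Rightarrow> complex) \<Rightarrow> 'h2" where
  "newton_pot B H = (THE u. \<forall>\<phi>. B \<phi> u = H \<phi>)"

text \<open>\<open>L(u 1\<^sub>\<Omega>)\<close> for \<open>u\<close> in the restricted space: \<open>\<phi> \<mapsto> B\<^sup>\<Omega>(\<phi>|\<^sub>\<Omega>, u)\<close>.\<close>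
definition L_ind :: "('o1 \<Rightarrow> 'o2 \<Rightarrow> complex) \<Rightarrow> ('h1 \<Rightarrow> 'o1) \<Rightarrow> 'o2 \<Rightarrow> 'h1 \<Rightarrow> complex" where
  "L_ind BO r1 u = (\<lambda>\<phi>. BO (r1 \<phi>) u)"

text \<open>\<open>D\<^sup>B f := -F| + (\<Pi>\<^sup>L (L(1 F)))|\<close>, computed from a representative \<open>F\<close> with \<open>Tr\<^sub>2 F = f\<close>.\<close>
definition DB_rep :: "('h1 \<Rightarrow> 'h2 \<Rightarrow> complex) \<Rightarrow> ('o1 \<Rightarrow> 'o2::group_add \<Rightarrow> complex) \<Rightarrow>
     ('h1 \<Rightarrow> 'o1) \<Rightarrow> ('h2 \<Rightarrow> 'o2) \<Rightarrow> 'h2 \<Rightarrow> 'o2" where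
  "DB_rep B BO r1 r2 F = - r2 F + r2 (newton_pot B (L_ind BO r1 (r2 F)))"

definition single_layer :: "('h1 \<Rightarrow> 'h2 \<Rightarrow> complex) \<Rightarrow> ('h1 \<Rightarrow> 'd1) \<Rightarrow> ('d1 \<Rightarrow> complex) \<Rightarrow> 'h2" where
  "single_layer B Tr1 g = newton_pot B (\<lambda>\<phi>. g (Tr1 \<phi>))"

end

theory Submission
  imports Defs
begin

text \<open>Since \<open>B = B\<^sup>\<Omega> + B\<^sup>\<C>\<close>, every \<open>F\<close> splits as
  \<open>F = \<Pi>(L(1\<^sub>\<Omega> F)) + \<Pi>(L(1\<^sub>\<C> F))\<close>, so \<open>D\<^sub>\<Omega> f = -(\<Pi>(L(1\<^sub>\<C> F)))|\<^sub>\<Omega>\<close>.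
  The left side sees \<open>F\<close> only through \<open>F|\<^sub>\<Omega>\<close>, the right side only through \<open>F|\<^sub>\<C>\<close>; gluing
  \<open>F|\<^sub>\<Omega>\<close> to \<open>G|\<^sub>\<C>\<close> for another representative \<open>G\<close> of the same trace shows independence of
  the representative. The inf-sup condition bounds \<open>\<parallel>\<Pi>(L(1\<^sub>\<C> G))\<parallel>\<close> by
  \<open>\<parallel>B\<^sup>\<C>\<parallel> \<parallel>G\<parallel> / \<lambda>\<close>, and the infimum over all such \<open>G\<close> gives the trace norm. The Newton
  potential exists by Babuska--Lax--Milgram, derived from the Riesz representation theorem
  in the complex Hilbert space.\<close>

lemma scaleC_zero_left [simp]: "scaleC 0 (x::'a::complex_vector) = 0"
  by (metis scaleR_scaleC scaleR_zero_left of_real_0)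

lemma scaleC_minus1: "scaleC (-1) (x::'a::complex_vector) = - x"
  by (metis scaleR_scaleC scaleR_minus1_left of_real_minus of_real_1)

lemma cinner_zero_left [simp]: "cinner 0 y = 0"
  by (metis scaleC_zero_left cinner_scaleC_left mult_zero_left)

lemma cinner_zero_right [simp]: "cinner x 0 = 0"
  by (metis cinner_commute cinner_zero_left complex_cnj_zero)

lemma cinner_add_right: "cinner x (y + z) = cinner x y + cinner x z"
  by (metis cinner_commute cinner_add_left complex_cnj_add)

lemma cinner_scaleC_right: "cinner x (scaleC a y) = cnj a * cinner x y"
  by (metis cinner_commute cinner_scaleC_left complex_cnj_mult)

lemma cinner_minus_left: "cinner (- x) y = - cinner x y"
  by (metis scaleC_minus1 cinner_scaleC_left mult_minus1)

lemma cinner_minus_right: "cinner x (- y) = - cinner x y"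
  by (metis cinner_commute cinner_minus_left complex_cnj_minus)

lemma cinner_diff_left: "cinner (x - y) z = cinner x z - cinner y z"
  by (simp only: cinner_add_left cinner_minus_left diff_conv_add_uminus)

lemma cinner_diff_right: "cinner x (y - z) = cinner x y - cinner x z"
  by (simp only: cinner_add_right cinner_minus_right diff_conv_add_uminus)

lemma cinner_self: "cinner x x = complex_of_real ((norm x)\<^sup>2)"
proof -
  have "Im (cinner x x) = 0"
    using cinner_commute[of x x] by (metis Reals_cnj_iff complex_is_Real_iff)
  moreover have "Re (cinner x x) \<ge> 0"
    by (metis norm_eq_sqrt_cinner norm_ge_zero real_sqrt_lt_0_iff not_le)
  ultimately show ?thesis
    using norm_eq_sqrt_cinner[of x] by (simp add: complex_eq_iff)
qed

lemma cinner_self_eq_zero_iff [simp]: "cinner x x = 0 \<longleftrightarrow> x = 0"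
  by (simp add: cinner_self)

lemma cinner_right_cancel:
  assumes "\<And>z. cinner z x = cinner z y"
  shows "x = y"
proof -
  have "cinner (x - y) (x - y) = 0"
    using assms by (simp add: cinner_diff_right)
  then show ?thesis by simp
qed

lemma power2_norm_add:
  "(norm (x + y))\<^sup>2 = (norm x)\<^sup>2 + (norm y)\<^sup>2 + 2 * Re (cinner x y)"
proof -
  have "Re (cinner (x + y) (x + y)) = Re (cinner x x) + Re (cinner y y) + 2 * Re (cinner x y)"
    using cinner_commute[of y x] by (simp add: cinner_add_left cinner_add_right)
  then show ?thesis by (simp add: cinner_self)
qed

lemma norm_scaleC: "norm (scaleC a (x::'a::complex_inner)) = cmod a * norm x"
proof -
  have "cinner (scaleC a x) (scaleC a x) = a * cnj a * cinner x x"
    by (simp add: cinner_scaleC_left cinner_scaleC_right mult.assoc)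
  also have "\<dots> = complex_of_real ((cmod a)\<^sup>2 * (norm x)\<^sup>2)"
    by (simp only: complex_mult_cnj cinner_self of_real_mult cmod_power2)
  finally have "(norm (scaleC a x))\<^sup>2 = (cmod a * norm x)\<^sup>2"
    by (simp only: cinner_self of_real_eq_iff power_mult_distrib)
  then show ?thesis by (rule power2_eq_imp_eq) simp_all
qed

lemma power2_norm_diff_scaleC_cinner:
  fixes s :: real
  shows "(norm (z - scaleC (complex_of_real s * cinner z m) m))\<^sup>2
     = (norm z)\<^sup>2 - 2 * s * (cmod (cinner z m))\<^sup>2 + s\<^sup>2 * (cmod (cinner z m))\<^sup>2 * (norm m)\<^sup>2"
proof -
  let ?t = "complex_of_real s * cinner z m"
  have e: "z - scaleC ?t m = z + scaleC (- ?t) m"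
    by (metis diff_conv_add_uminus scaleC_minus1 scaleC_scaleC mult_minus1)
  have r: "Re (cinner z (scaleC (- ?t) m)) = - s * (cmod (cinner z m))\<^sup>2"
    by (simp add: cinner_scaleC_right cmod_power2) (simp add: power2_eq_square algebra_simps)
  have n: "norm (scaleC (- ?t) m) = \<bar>s\<bar> * cmod (cinner z m) * norm m"
    by (simp add: norm_scaleC norm_mult)
  show ?thesis
    unfolding e power2_norm_add r n by (simp add: power_mult_distrib power2_abs)
qed

lemma cauchy_schwarz: "cmod (cinner x y) \<le> norm x * norm y"
proof (cases "y = 0")
  case False
  then have ny: "norm y > 0" by simp
  have "0 \<le> (norm (x - scaleC (complex_of_real (1 / (norm y)\<^sup>2) * cinner x y) y))\<^sup>2"
    by simp
  also have "\<dots> = (norm x)\<^sup>2 - (cmod (cinner x y))\<^sup>2 / (norm y)\<^sup>2"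
    unfolding power2_norm_diff_scaleC_cinner using ny by (simp add: field_simps power2_eq_square)
  finally have "(cmod (cinner x y))\<^sup>2 \<le> (norm x * norm y)\<^sup>2"
    using ny by (simp add: field_simps power_mult_distrib)
  then show ?thesis by (simp add: power_mono_iff)
qed simp

lemma parallelogram_law:
  fixes a b :: "'a::complex_inner"
  shows "(norm (a - b))\<^sup>2 + (norm (a + b))\<^sup>2 = 2 * (norm a)\<^sup>2 + 2 * (norm b)\<^sup>2"
  using power2_norm_add[of a b] power2_norm_add[of a "- b"] by (simp add: cinner_minus_right)

lemma power2_norm_diff_le_midpoint:
  fixes x a b :: "'a::complex_inner"
  assumes "d \<le> norm (x - scaleR (1/2) (a + b))" and "0 \<le> d"
  shows "(norm (a - b))\<^sup>2 \<le> 2 * (norm (x - a))\<^sup>2 + 2 * (norm (x - b))\<^sup>2 - 4 * d\<^sup>2"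
proof -
  have "(x - a) + (x - b) = scaleR 2 (x - scaleR (1/2) (a + b))"
    by (simp add: algebra_simps scaleR_2)
  then have "2 * d \<le> norm ((x - a) + (x - b))"
    using assms(1) by simp
  then have "4 * d\<^sup>2 \<le> (norm ((x - a) + (x - b)))\<^sup>2"
    using power_mono[of "2 * d" _ 2] assms(2) by (simp add: power_mult_distrib)
  moreover have "(norm (a - b))\<^sup>2 = (norm ((x - a) - (x - b)))\<^sup>2"
    by (simp add: norm_minus_commute)
  ultimately show ?thesis
    using parallelogram_law[of "x - a" "x - b"] by linarith
qed

lemma Cauchy_if_power2_dist_le:
  fixes X :: "nat \<Rightarrow> 'a::real_normed_vector"
  assumes le: "\<And>m n. (norm (X m - X n))\<^sup>2 \<le> t m + t n" and t: "t \<longlonglongrightarrow> 0"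
  shows "Cauchy X"
proof (unfold Cauchy_def, intro allI impI)
  fix e :: real
  assume e: "e > 0"
  then obtain N where N: "\<And>n. n \<ge> N \<Longrightarrow> norm (t n) < e\<^sup>2 / 2"
    using t unfolding LIMSEQ_iff by (metis half_gt_zero zero_less_power diff_zero)
  show "\<exists>N. \<forall>m\<ge>N. \<forall>n\<ge>N. dist (X m) (X n) < e"
  proof (intro exI allI impI)
    fix m n assume "m \<ge> N" "n \<ge> N"
    then have "(norm (X m - X n))\<^sup>2 < e\<^sup>2"
      using le[of m n] N[of m] N[of n] by auto
    then show "dist (X m) (X n) < e"
      using e by (simp add: dist_norm power_less_imp_less_base)
  qed
qed

lemma minimizing_sequence_exists:
  fixes f :: "'a \<Rightarrow> real"
  assumes "S \<noteq> {}" and "bdd_below (f ` S)"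
  obtains X where "\<And>n. X n \<in> S" and "(\<lambda>n. f (X n)) \<longlonglongrightarrow> Inf (f ` S)"
proof -
  have "\<exists>y\<in>S. f y < Inf (f ` S) + inverse (real (Suc n))" for n
    using cInf_lessD[of "f ` S" "Inf (f ` S) + inverse (real (Suc n))"] assms(1) by auto
  then obtain X where X: "\<And>n. X n \<in> S"
    and X_less: "\<And>n. f (X n) < Inf (f ` S) + inverse (real (Suc n))"
    by metis
  have "(\<lambda>n. f (X n)) \<longlonglongrightarrow> Inf (f ` S)"
  proof (rule tendsto_sandwich[OF _ _ tendsto_const])
    show "\<forall>\<^sub>F n in sequentially. Inf (f ` S) \<le> f (X n)"
      using X assms(2) by (simp add: cInf_lower)
    show "\<forall>\<^sub>F n in sequentially. f (X n) \<le> Inf (f ` S) + inverse (real (Suc n))"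
      using X_less by (simp add: less_imp_le)
    show "(\<lambda>n. Inf (f ` S) + inverse (real (Suc n))) \<longlonglongrightarrow> Inf (f ` S)"
      using tendsto_add[OF tendsto_const LIMSEQ_inverse_real_of_nat] by simp
  qed
  then show ?thesis
    using that X by blast
qed

lemma nearest_point_exists:
  fixes M :: "'a::chilbert_space set"
  assumes closed: "closed M" and nonempty: "M \<noteq> {}"
    and midpoint: "\<And>a b. a \<in> M \<Longrightarrow> b \<in> M \<Longrightarrow> scaleR (1/2) (a + b) \<in> M"
  shows "\<exists>p\<in>M. \<forall>m\<in>M. norm (x - p) \<le> norm (x - m)"
proof -
  define d where "d = Inf ((\<lambda>m. norm (x - m)) ` M)"
  have bdd: "bdd_below ((\<lambda>m. norm (x - m)) ` M)"
    by (auto intro: bdd_belowI[of _ 0])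
  have d_le: "d \<le> norm (x - m)" if "m \<in> M" for m
    unfolding d_def using that bdd by (auto intro: cInf_lower)
  have d_nonneg: "0 \<le> d"
    unfolding d_def using nonempty by (auto intro!: cInf_greatest)
  obtain X where X: "\<And>n. X n \<in> M" and dist_lim: "(\<lambda>n. norm (x - X n)) \<longlonglongrightarrow> d"
    using minimizing_sequence_exists[OF nonempty bdd] unfolding d_def by blast
  define t where "t n = 2 * (norm (x - X n))\<^sup>2 - 2 * d\<^sup>2" for n
  have "Cauchy X"
  proof (rule Cauchy_if_power2_dist_le)
    show "(norm (X m - X n))\<^sup>2 \<le> t m + t n" for m n
      using power2_norm_diff_le_midpoint[OF d_le[OF midpoint[OF X X]] d_nonneg]
      by (simp add: t_def)
    have "t \<longlonglongrightarrow> 2 * d\<^sup>2 - 2 * d\<^sup>2"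
      unfolding t_def by (intro tendsto_intros dist_lim)
    then show "t \<longlonglongrightarrow> 0" by simp
  qed
  then obtain p where "X \<longlonglongrightarrow> p"
    using Cauchy_convergent convergent_def by blast
  moreover have "p \<in> M"
    using closed X \<open>X \<longlonglongrightarrow> p\<close> closed_sequential_limits by blast
  moreover have "(\<lambda>n. norm (x - X n)) \<longlonglongrightarrow> norm (x - p)"
    using \<open>X \<longlonglongrightarrow> p\<close> by (intro tendsto_intros)
  then have "norm (x - p) = d"
    using dist_lim LIMSEQ_unique by blast
  ultimately show ?thesis
    using d_le by auto
qed

lemma nearest_point_orthogonal:
  fixes M :: "'a::chilbert_space set"
  assumes p: "p \<in> M" and nearest: "\<And>m. m \<in> M \<Longrightarrow> norm (x - p) \<le> norm (x - m)"
    and add: "\<And>a b. a \<in> M \<Longrightarrow> b \<in> M \<Longrightarrow> a + b \<in> M"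
    and scale: "\<And>a c. a \<in> M \<Longrightarrow> scaleC c a \<in> M"
    and m: "m \<in> M"
  shows "cinner (x - p) m = 0"
proof -
  define z where "z = x - p"
  define c where "c = cinner z m"
  define s where "s = 1 / ((norm m)\<^sup>2 + 1)"
  have s_pos: "s > 0"
    by (simp add: s_def add_nonneg_pos)
  have "norm z \<le> norm (z - scaleC (complex_of_real s * c) m)"
    using nearest[OF add[OF p scale[OF m]]] unfolding z_def by (simp add: algebra_simps)
  then have "(norm z)\<^sup>2 \<le> (norm (z - scaleC (complex_of_real s * c) m))\<^sup>2"
    by (intro power_mono) auto
  then have "2 * s * (cmod c)\<^sup>2 \<le> s\<^sup>2 * (cmod c)\<^sup>2 * (norm m)\<^sup>2"
    unfolding c_def power2_norm_diff_scaleC_cinner by simp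
  then have "2 * (cmod c)\<^sup>2 \<le> s * (cmod c)\<^sup>2 * (norm m)\<^sup>2"
    using s_pos by (simp add: power2_eq_square field_simps)
  also have "\<dots> = (cmod c)\<^sup>2 * ((norm m)\<^sup>2 / ((norm m)\<^sup>2 + 1))"
    by (simp add: s_def field_simps)
  also have "\<dots> \<le> (cmod c)\<^sup>2"
    using mult_left_mono[of "(norm m)\<^sup>2 / ((norm m)\<^sup>2 + 1)" 1 "(cmod c)\<^sup>2"]
    by (simp add: add_nonneg_pos)
  finally show ?thesis
    by (simp add: c_def z_def)
qed

lemma orthogonal_projection_exists:
  fixes M :: "'a::chilbert_space set"
  assumes "closed M" and "M \<noteq> {}"
    and add: "\<And>a b. a \<in> M \<Longrightarrow> b \<in> M \<Longrightarrow> a + b \<in> M"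
    and scale: "\<And>a c. a \<in> M \<Longrightarrow> scaleC c a \<in> M"
  shows "\<exists>p\<in>M. \<forall>m\<in>M. cinner (x - p) m = 0"
proof -
  have "scaleR (1/2) (a + b) \<in> M" if "a \<in> M" "b \<in> M" for a b
    using scale[OF add[OF that]] by (simp add: scaleR_scaleC)
  then obtain p where "p \<in> M" "\<forall>m\<in>M. norm (x - p) \<le> norm (x - m)"
    using nearest_point_exists[OF assms(1,2)] by blast
  then show ?thesis
    using nearest_point_orthogonal[OF _ _ add scale] by blast
qed

lemma bounded_clinear_into_norm_imp_bounded_linear:
  fixes H :: "'a::{complex_vector,real_normed_vector} \<Rightarrow> complex"
  assumes "bounded_clinear_into norm H"
  shows "bounded_linear H"
proof -
  obtain K where add: "\<And>x y. H (x + y) = H x + H y" and scale: "\<And>c x. H (scaleC c x) = c * H x"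
    and bound: "\<And>x. norm (H x) \<le> K * norm x"
    using assms by (auto simp: bounded_clinear_into_def clinear_def scaleC_complex_def)
  show ?thesis
  proof (rule bounded_linear_intro[OF add])
    show "H (scaleR r x) = scaleR r (H x)" for r x
      by (simp add: scaleR_scaleC scale scaleC_complex_def)
    show "norm (H x) \<le> norm x * K" for x
      using bound[of x] by (simp add: mult.commute)
  qed
qed

lemma bounded_clinear_into_normI:
  fixes H :: "'a::{complex_vector,real_normed_vector} \<Rightarrow> complex"
  assumes "\<And>x y. H (x + y) = H x + H y" and "\<And>c x. H (scaleC c x) = c * H x"
    and "\<And>x. cmod (H x) \<le> K * norm x"
  shows "bounded_clinear_into norm H"
  using assms by (auto simp: bounded_clinear_into_def clinear_def scaleC_complex_def)

lemma riesz_representation: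
  fixes H :: "'a::chilbert_space \<Rightarrow> complex"
  assumes H: "bounded_clinear_into norm H"
  shows "\<exists>h. \<forall>x. H x = cinner x h"
proof (cases "\<forall>x. H x = 0")
  case True
  then show ?thesis by (intro exI[of _ 0]) simp
next
  case False
  then obtain x0 where Hx0: "H x0 \<noteq> 0" by blast
  interpret H: bounded_linear H
    by (rule bounded_clinear_into_norm_imp_bounded_linear[OF H])
  have scale: "H (scaleC c x) = c * H x" for c x
    using H by (simp add: bounded_clinear_into_def clinear_def scaleC_complex_def)
  define N where "N = {x. H x = 0}"
  have "closed N"
    unfolding N_def by (intro closed_Collect_eq linear_continuous_on H.bounded_linear_axioms
        continuous_on_const)
  moreover have "N \<noteq> {}"
    using H.zero unfolding N_def by blast
  ultimately obtain p where "p \<in> N" and orth: "\<forall>m\<in>N. cinner (x0 - p) m = 0"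
    using orthogonal_projection_exists[of N x0] by (auto simp: N_def H.add scale)
  define z where "z = x0 - p"
  have Hz: "H z = H x0"
    using \<open>p \<in> N\<close> by (simp add: z_def N_def H.diff)
  then have "z \<noteq> 0"
    using Hx0 by auto
  have "H x = cinner x (scaleC (cnj (H z / cinner z z)) z)" for x
  proof -
    \<comment> \<open>\<open>x - (H x / H z) z\<close> lies in the kernel, hence is orthogonal to \<open>z\<close>\<close>
    have "cinner z (x - scaleC (H x / H z) z) = 0"
      using orth Hx0 Hz by (simp add: N_def z_def H.diff scale)
    then have "cinner (x - scaleC (H x / H z) z) z = 0"
      by (metis cinner_commute complex_cnj_zero)
    then have "cinner x z = (H x / H z) * cinner z z"
      by (simp add: cinner_diff_left cinner_scaleC_left)
    then show ?thesis
      using \<open>z \<noteq> 0\<close> Hx0 Hz by (simp add: cinner_scaleC_right)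
  qed
  then show ?thesis by blast
qed

lemma Inf_bounds:
  fixes a b :: "'x \<Rightarrow> real"
  assumes bound: "\<forall>x\<in>X. a x \<le> K * b x" and nonneg: "\<forall>x\<in>X. 0 \<le> b x"
  shows Inf_bounds_nonneg: "0 \<le> Inf {K. 0 \<le> K \<and> (\<forall>x\<in>X. a x \<le> K * b x)}"
    and Inf_bounds_bound: "\<forall>x\<in>X. a x \<le> Inf {K. 0 \<le> K \<and> (\<forall>x\<in>X. a x \<le> K * b x)} * b x"
proof -
  let ?S = "{K. 0 \<le> K \<and> (\<forall>x\<in>X. a x \<le> K * b x)}"
  have "max K 0 \<in> ?S"
    using bound nonneg by (auto intro: order_trans[OF _ mult_right_mono[of K "max K 0"]])
  then have nonempty: "?S \<noteq> {}" by blast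
  then show "0 \<le> Inf ?S"
    by (auto intro: cInf_greatest)
  show "\<forall>x\<in>X. a x \<le> Inf ?S * b x"
  proof
    fix x assume x: "x \<in> X"
    show "a x \<le> Inf ?S * b x"
    proof (cases "b x = 0")
      case True
      then show ?thesis using bound x by auto
    next
      case False
      then have "b x > 0" using nonneg x by (simp add: order_less_le)
      then have "a x / b x \<le> Inf ?S"
        using x by (intro cInf_greatest[OF nonempty]) (auto simp: divide_le_eq)
      then show ?thesis using \<open>b x > 0\<close> by (simp add: divide_le_eq)
    qed
  qed
qed

lemma bilin_norm_bound:
  assumes "bilin_bounded A C nA nC f"
    and "\<And>u v. u \<in> A \<Longrightarrow> v \<in> C \<Longrightarrow> 0 \<le> nA u * nC v"
    and "u \<in> A" and "v \<in> C"
  shows "cmod (f u v) \<le> bilin_norm A C nA nC f * nA u * nC v"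
proof -
  obtain K where "\<forall>p\<in>A \<times> C. cmod (f (fst p) (snd p)) \<le> K * (nA (fst p) * nC (snd p))"
    using assms(1) by (auto simp: bilin_bounded_def mult.assoc)
  from Inf_bounds_bound[OF this] assms(2-4)
  show ?thesis
    by (simp add: bilin_norm_def mult.assoc)
qed

lemma bilin_norm_nonneg:
  assumes "bilin_bounded A C nA nC f"
    and "\<And>u v. u \<in> A \<Longrightarrow> v \<in> C \<Longrightarrow> 0 \<le> nA u * nC v"
  shows "0 \<le> bilin_norm A C nA nC f"
proof -
  obtain K where "\<forall>p\<in>A \<times> C. cmod (f (fst p) (snd p)) \<le> K * (nA (fst p) * nC (snd p))"
    using assms(1) by (auto simp: bilin_bounded_def mult.assoc)
  from Inf_bounds_nonneg[OF this] assms(2)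
  show ?thesis
    by (simp add: bilin_norm_def mult.assoc)
qed

lemma dual_norm_bound:
  assumes "in_dual D nD g" and "\<And>x. x \<in> D \<Longrightarrow> 0 \<le> nD x" and "x \<in> D"
  shows "cmod (g x) \<le> dual_norm D nD g * nD x"
  using Inf_bounds_bound[of D "\<lambda>x. cmod (g x)" _ nD] assms
  by (auto simp: in_dual_def dual_norm_def)

lemma dual_norm_nonneg:
  assumes "in_dual D nD g" and "\<And>x. x \<in> D \<Longrightarrow> 0 \<le> nD x"
  shows "0 \<le> dual_norm D nD g"
  using Inf_bounds_nonneg[of D "\<lambda>x. cmod (g x)" _ nD] assms
  by (auto simp: in_dual_def dual_norm_def)

lemma qnorm_le_norm: "qnorm T (T F) \<le> norm F"
  unfolding qnorm_def by (rule cInf_lower) (auto intro: bdd_belowI[of _ 0])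

lemma qnorm_nonneg: "0 \<le> qnorm T (T F)"
  unfolding qnorm_def by (rule cInf_greatest) auto

lemma qnorm_mult_qnorm_nonneg: "u \<in> range r1 \<Longrightarrow> v \<in> range r2 \<Longrightarrow> 0 \<le> qnorm r1 u * qnorm r2 v"
  by (auto intro!: mult_nonneg_nonneg qnorm_nonneg)

lemma le_mult_qnorm:
  assumes le: "\<And>F. T F = y \<Longrightarrow> x \<le> c * norm F" and "y \<in> range T" and "0 \<le> c"
  shows "x \<le> c * qnorm T y"
proof -
  obtain F0 where F0: "T F0 = y"
    using \<open>y \<in> range T\<close> by blast
  show ?thesis
  proof (cases "c = 0")
    case True
    then show ?thesis using le[OF F0] by simp
  next
    case False
    then have "x / c \<le> qnorm T y"
      unfolding qnorm_def using F0 le \<open>0 \<le> c\<close>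
      by (intro cInf_greatest) (auto simp: divide_le_eq mult.commute)
    then show ?thesis
      using False \<open>0 \<le> c\<close> by (simp add: divide_le_eq mult.commute)
  qed
qed

lemma clinear_minus:
  assumes "clinear T"
  shows "T (- x) = - T x"
  using assms by (metis clinear_def scaleC_minus1)

lemma bilin_norm_qnorm_bound:
  fixes r1 :: "'h1::real_normed_vector \<Rightarrow> 'o1" and r2 :: "'h2::real_normed_vector \<Rightarrow> 'o2"
  assumes "bilin_bounded (range r1) (range r2) (qnorm r1) (qnorm r2) BX"
  shows "cmod (BX (r1 x) (r2 F))
           \<le> bilin_norm (range r1) (range r2) (qnorm r1) (qnorm r2) BX * norm x * norm F"
proof -
  let ?K = "bilin_norm (range r1) (range r2) (qnorm r1) (qnorm r2) BX"
  have "cmod (BX (r1 x) (r2 F)) \<le> ?K * qnorm r1 (r1 x) * qnorm r2 (r2 F)"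
    by (rule bilin_norm_bound[OF assms qnorm_mult_qnorm_nonneg]) auto
  also have "\<dots> \<le> ?K * norm x * norm F"
    using bilin_norm_nonneg[OF assms qnorm_mult_qnorm_nonneg]
    by (intro mult_mono mult_left_mono qnorm_le_norm qnorm_nonneg mult_nonneg_nonneg) auto
  finally show ?thesis .
qed

lemma L_ind_bounded_clinear:
  fixes r1 :: "'h1::complex_inner \<Rightarrow> 'o1::complex_vector"
    and r2 :: "'h2::real_normed_vector \<Rightarrow> 'o2::complex_vector"
  assumes "clinear r1" and "bilinear_on (range r1) (range r2) BX"
    and "bilin_bounded (range r1) (range r2) (qnorm r1) (qnorm r2) BX"
  shows "bounded_clinear_into norm (L_ind BX r1 (r2 F))"
proof (rule bounded_clinear_into_normI)
  show "L_ind BX r1 (r2 F) (x + y) = L_ind BX r1 (r2 F) x + L_ind BX r1 (r2 F) y"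
    and "L_ind BX r1 (r2 F) (scaleC c x) = c * L_ind BX r1 (r2 F) x" for x y c
    using assms(1,2) by (auto simp: L_ind_def clinear_def bilinear_on_def)
  show "cmod (L_ind BX r1 (r2 F) x)
          \<le> bilin_norm (range r1) (range r2) (qnorm r1) (qnorm r2) BX * norm F * norm x" for x
    using bilin_norm_qnorm_bound[OF assms(3)] by (simp add: L_ind_def mult_ac)
qed

locale inf_sup_form =
  fixes B :: "'h1::chilbert_space \<Rightarrow> 'h2::chilbert_space \<Rightarrow> complex" and lam :: real
  assumes bilinear: "bilinear_on UNIV UNIV B"
    and bounded: "bilin_bounded UNIV UNIV norm norm B"
    and lam_pos: "lam > 0"
    and inf_sup_left: "\<And>v. lam * norm v \<le> (SUP w. cmod (B w v) / norm w)"
    and inf_sup_right: "\<And>u. lam * norm u \<le> (SUP w. cmod (B u w) / norm w)"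
begin

lemma add_left: "B (x + y) v = B x v + B y v"
  and scaleC_left: "B (scaleC c x) v = c * B x v"
  and add_right: "B x (u + v) = B x u + B x v"
  and scaleC_right: "B x (scaleC c u) = c * B x u"
  using bilinear by (auto simp: bilinear_on_def)

lemma diff_right: "B x (u - v) = B x u - B x v"
  using add_right[of x u "scaleC (-1) v"] scaleC_right[of x "-1" v] by (simp add: scaleC_minus1)

lemma bound: "cmod (B x u) \<le> bilin_norm UNIV UNIV norm norm B * norm x * norm u"
  using bilin_norm_bound[OF bounded] by simp

lemma lam_mult_norm_le:
  assumes "\<And>w. cmod (B w v) \<le> K * norm w" and "0 \<le> K"
  shows "lam * norm v \<le> K"
proof -
  have "(SUP w. cmod (B w v) / norm w) \<le> K"
    using assms by (intro cSUP_least) (auto simp: divide_le_eq mult.commute)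
  then show ?thesis
    using inf_sup_left[of v] by linarith
qed

lemma eq_zero_if_left_vanishing: "(\<And>w. B w v = 0) \<Longrightarrow> v = 0"
  using lam_mult_norm_le[of v 0] mult_le_cancel_left_pos[OF lam_pos, of "norm v" 0] by simp

lemma eq_zero_if_right_vanishing:
  assumes "\<And>w. B u w = 0"
  shows "u = 0"
proof -
  have "(SUP w. cmod (B u w) / norm w) \<le> 0"
    using assms by (intro cSUP_least) auto
  then show ?thesis
    using inf_sup_right[of u] mult_le_cancel_left_pos[OF lam_pos, of "norm u" 0] by simp
qed

lemma representing_operator_exists:
  obtains A where "\<And>\<phi> u. B \<phi> u = cinner \<phi> (A u)" and "bounded_linear A"
    and "\<And>c u. A (scaleC c u) = scaleC (cnj c) (A u)" and "\<And>u. lam * norm u \<le> norm (A u)"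
proof -
  let ?K = "bilin_norm UNIV UNIV norm norm B"
  have "\<exists>h. \<forall>\<phi>. B \<phi> u = cinner \<phi> h" for u
    by (intro riesz_representation bounded_clinear_into_normI[where K = "?K * norm u"])
      (use add_left scaleC_left bound in \<open>auto simp: mult_ac\<close>)
  then obtain A where A: "\<And>\<phi> u. B \<phi> u = cinner \<phi> (A u)"
    by metis
  have A_add: "A (u + v) = A u + A v" for u v
    by (rule cinner_right_cancel) (simp add: cinner_add_right A[symmetric] add_right)
  have A_scaleC: "A (scaleC c u) = scaleC (cnj c) (A u)" for c u
    by (rule cinner_right_cancel) (simp add: cinner_scaleC_right A[symmetric] scaleC_right)
  have A_bound: "norm (A u) \<le> ?K * norm u" for u
  proof (cases "A u = 0")
    case False
    have "(norm (A u))\<^sup>2 = Re (cinner (A u) (A u))"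
      by (simp add: cinner_self)
    also have "\<dots> \<le> ?K * norm (A u) * norm u"
      using bound[of "A u" u] A complex_Re_le_cmod order_trans by metis
    finally show ?thesis
      using False by (simp add: power2_eq_square mult.assoc)
  qed (simp add: bilin_norm_nonneg[OF bounded])
  have linear: "bounded_linear A"
  proof (rule bounded_linear_intro[OF A_add])
    show "A (scaleR r u) = scaleR r (A u)" for r u
      by (simp add: scaleR_scaleC A_scaleC)
    show "norm (A u) \<le> norm u * ?K" for u
      using A_bound by (simp add: mult.commute)
  qed
  have "lam * norm u \<le> norm (A u)" for u
    using A cauchy_schwarz by (intro lam_mult_norm_le) (auto simp: mult.commute)
  then show ?thesis
    by (rule that[OF A linear A_scaleC])
qed

text \<open>Babuska--Lax--Milgram: the representing operator is bounded below, so its range is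
  closed; the Riesz vector of \<open>H\<close> minus its projection onto that range is orthogonal to
  the range, hence vanishes by the inf-sup condition in the second argument.\<close>

lemma newton_pot_exists:
  assumes "bounded_clinear_into norm H"
  shows "\<exists>u. \<forall>\<phi>. B \<phi> u = H \<phi>"
proof -
  obtain A where A: "\<And>\<phi> u. B \<phi> u = cinner \<phi> (A u)" and "bounded_linear A"
    and A_scaleC: "\<And>c u. A (scaleC c u) = scaleC (cnj c) (A u)"
    and A_below: "\<And>u. lam * norm u \<le> norm (A u)"
    using representing_operator_exists by blast
  interpret A: bounded_linear A by fact
  have "complete (range A)"
    using complete_isometric_image[OF lam_pos subspace_UNIV \<open>bounded_linear A\<close> _ complete_UNIV]
      A_below by simp
  then have "closed (range A)"
    by (simp add: complete_eq_closed)
  moreover have "a + b \<in> range A" if "a \<in> range A" "b \<in> range A" for a b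
    using that by (auto simp: A.add[symmetric])
  moreover have "scaleC c a \<in> range A" if "a \<in> range A" for a c
    using that by (metis A_scaleC complex_cnj_cnj rangeE rangeI)
  moreover obtain h where h: "\<And>x. H x = cinner x h"
    using riesz_representation[OF assms] by blast
  ultimately obtain u where "\<forall>v. cinner (h - A u) (A v) = 0"
    using orthogonal_projection_exists[of "range A" h] by blast
  then have "h - A u = 0"
    by (intro eq_zero_if_right_vanishing) (simp add: A)
  then show ?thesis
    using A h by auto
qed

lemma newton_pot_eq:
  assumes "bounded_clinear_into norm H"
  shows "B \<phi> (newton_pot B H) = H \<phi>"
proof -
  obtain u where u: "\<forall>\<phi>. B \<phi> u = H \<phi>"
    using newton_pot_exists[OF assms] by blast
  have "newton_pot B H = u"
    unfolding newton_pot_def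
  proof (rule the_equality)
    show "\<forall>\<phi>. B \<phi> u = H \<phi>" by (rule u)
  next
    fix u' assume "\<forall>\<phi>. B \<phi> u' = H \<phi>"
    then have "u' - u = 0"
      using u by (intro eq_zero_if_left_vanishing) (simp add: diff_right)
    then show "u' = u" by simp
  qed
  then show ?thesis
    using u by simp
qed

lemma newton_pot_L_ind:
  fixes r1 :: "'h1 \<Rightarrow> 'o1::complex_vector"
  assumes "clinear r1" and "bilinear_on (range r1) (range r2) BX"
    and "bilin_bounded (range r1) (range r2) (qnorm r1) (qnorm r2) BX"
  shows "B \<phi> (newton_pot B (L_ind BX r1 (r2 F))) = BX (r1 \<phi>) (r2 F)"
  using newton_pot_eq[OF L_ind_bounded_clinear[OF assms]] by (simp add: L_ind_def)

lemma norm_newton_pot_L_ind_le: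
  fixes r1 :: "'h1 \<Rightarrow> 'o1::complex_vector"
  assumes "clinear r1" and "bilinear_on (range r1) (range r2) BX"
    and bounded: "bilin_bounded (range r1) (range r2) (qnorm r1) (qnorm r2) BX"
  shows "norm (newton_pot B (L_ind BX r1 (r2 F)))
           \<le> bilin_norm (range r1) (range r2) (qnorm r1) (qnorm r2) BX / lam * norm F"
proof -
  let ?K = "bilin_norm (range r1) (range r2) (qnorm r1) (qnorm r2) BX"
  have "0 \<le> ?K"
    by (rule bilin_norm_nonneg[OF bounded qnorm_mult_qnorm_nonneg])
  then have "lam * norm (newton_pot B (L_ind BX r1 (r2 F))) \<le> ?K * norm F"
    using bilin_norm_qnorm_bound[OF bounded]
    by (intro lam_mult_norm_le) (auto simp: newton_pot_L_ind[OF assms] mult_ac)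
  then show ?thesis
    using lam_pos by (simp add: field_simps)
qed

lemma norm_single_layer_le:
  assumes "clinear Tr1" and g: "in_dual (range Tr1) (qnorm Tr1) g"
  shows "norm (single_layer B Tr1 g) \<le> dual_norm (range Tr1) (qnorm Tr1) g / lam"
proof -
  let ?K = "dual_norm (range Tr1) (qnorm Tr1) g"
  have K_nonneg: "0 \<le> ?K"
    by (rule dual_norm_nonneg[OF g]) (auto simp: qnorm_nonneg)
  have bound: "cmod (g (Tr1 x)) \<le> ?K * norm x" for x
  proof -
    have "cmod (g (Tr1 x)) \<le> ?K * qnorm Tr1 (Tr1 x)"
      by (rule dual_norm_bound[OF g]) (auto simp: qnorm_nonneg)
    also have "\<dots> \<le> ?K * norm x"
      by (intro mult_left_mono qnorm_le_norm K_nonneg)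
    finally show ?thesis .
  qed
  have "bounded_clinear_into norm (\<lambda>x. g (Tr1 x))"
    using assms(1) g bound by (intro bounded_clinear_into_normI) (auto simp: clinear_def in_dual_def)
  then have "B \<phi> (single_layer B Tr1 g) = g (Tr1 \<phi>)" for \<phi>
    by (simp add: single_layer_def newton_pot_eq)
  then have "lam * norm (single_layer B Tr1 g) \<le> ?K"
    using bound K_nonneg by (intro lam_mult_norm_le) auto
  then show ?thesis
    using lam_pos by (simp add: field_simps)
qed

end

locale split_form = inf_sup_form B lam
  for B :: "'h1::chilbert_space \<Rightarrow> 'h2::chilbert_space \<Rightarrow> complex" and lam +
  fixes BX :: "'x1::complex_vector \<Rightarrow> 'x2::complex_vector \<Rightarrow> complex"
    and rX1 :: "'h1 \<Rightarrow> 'x1" and rX2 :: "'h2 \<Rightarrow> 'x2"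
    and BY :: "'y1::complex_vector \<Rightarrow> 'y2::complex_vector \<Rightarrow> complex"
    and rY1 :: "'h1 \<Rightarrow> 'y1" and rY2 :: "'h2 \<Rightarrow> 'y2"
  assumes split: "\<And>u v. B u v = BX (rX1 u) (rX2 v) + BY (rY1 u) (rY2 v)"
    and rX1_clinear: "clinear rX1" and rX2_clinear: "clinear rX2" and rY1_clinear: "clinear rY1"
    and BX_bilinear: "bilinear_on (range rX1) (range rX2) BX"
    and BX_bounded: "bilin_bounded (range rX1) (range rX2) (qnorm rX1) (qnorm rX2) BX"
    and BY_bilinear: "bilinear_on (range rY1) (range rY2) BY"
    and BY_bounded: "bilin_bounded (range rY1) (range rY2) (qnorm rY1) (qnorm rY2) BY"
begin

lemma newton_pot_decomposition:
  "F = newton_pot B (L_ind BX rX1 (rX2 F)) + newton_pot B (L_ind BY rY1 (rY2 F))"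
proof -
  have "F - (newton_pot B (L_ind BX rX1 (rX2 F)) + newton_pot B (L_ind BY rY1 (rY2 F))) = 0"
    by (intro eq_zero_if_left_vanishing)
      (simp add: diff_right add_right split[of _ F]
        newton_pot_L_ind[OF rX1_clinear BX_bilinear BX_bounded]
        newton_pot_L_ind[OF rY1_clinear BY_bilinear BY_bounded])
  then show ?thesis by simp
qed

lemma DB_rep_eq: "DB_rep B BX rX1 rX2 F = - rX2 (newton_pot B (L_ind BY rY1 (rY2 F)))"
proof -
  have "rX2 F = rX2 (newton_pot B (L_ind BX rX1 (rX2 F))) + rX2 (newton_pot B (L_ind BY rY1 (rY2 F)))"
    using rX2_clinear newton_pot_decomposition[of F] by (metis clinear_def)
  then show ?thesis
    by (simp add: DB_rep_def algebra_simps)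
qed

definition admits_gluing :: "('h2 \<Rightarrow> 'd) \<Rightarrow> bool" where
  "admits_gluing T \<longleftrightarrow> (\<forall>F G. T F = T G \<longrightarrow> (\<exists>W. rX2 W = rX2 F \<and> rY2 W = rY2 G))"

lemma DB_rep_trace_invariant:
  assumes "admits_gluing T" and "T F = T G"
  shows "DB_rep B BX rX1 rX2 F = DB_rep B BX rX1 rX2 G"
proof -
  obtain W where "rX2 W = rX2 F" and "rY2 W = rY2 G"
    using assms by (auto simp: admits_gluing_def)
  then have "DB_rep B BX rX1 rX2 F = DB_rep B BX rX1 rX2 W"
    by (simp add: DB_rep_def)
  also have "\<dots> = DB_rep B BX rX1 rX2 G"
    using \<open>rY2 W = rY2 G\<close> by (simp add: DB_rep_eq)
  finally show ?thesis .
qed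

lemma qnorm_DB_rep_le:
  assumes "admits_gluing T"
  shows "qnorm rX2 (DB_rep B BX rX1 rX2 F)
           \<le> bilin_norm (range rY1) (range rY2) (qnorm rY1) (qnorm rY2) BY / lam * qnorm T (T F)"
proof (rule le_mult_qnorm)
  fix G assume "T G = T F"
  then have "DB_rep B BX rX1 rX2 F = rX2 (- newton_pot B (L_ind BY rY1 (rY2 G)))"
    using DB_rep_trace_invariant[OF assms] DB_rep_eq clinear_minus[OF rX2_clinear] by metis
  then have "qnorm rX2 (DB_rep B BX rX1 rX2 F) \<le> norm (newton_pot B (L_ind BY rY1 (rY2 G)))"
    using qnorm_le_norm by (metis norm_minus_cancel)
  also have "\<dots> \<le> bilin_norm (range rY1) (range rY2) (qnorm rY1) (qnorm rY2) BY / lam * norm G"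
    by (rule norm_newton_pot_L_ind_le[OF rY1_clinear BY_bilinear BY_bounded])
  finally show "qnorm rX2 (DB_rep B BX rX1 rX2 F)
      \<le> bilin_norm (range rY1) (range rY2) (qnorm rY1) (qnorm rY2) BY / lam * norm G" .
next
  show "0 \<le> bilin_norm (range rY1) (range rY2) (qnorm rY1) (qnorm rY2) BY / lam"
    using bilin_norm_nonneg[OF BY_bounded qnorm_mult_qnorm_nonneg] lam_pos by auto
qed simp

end

theorem lemma4p2:
  fixes B :: "'h1::chilbert_space \<Rightarrow> 'h2::chilbert_space \<Rightarrow> complex"
    and BO :: "'o1::complex_vector \<Rightarrow> 'o2::complex_vector \<Rightarrow> complex"
    and BC :: "'c1::complex_vector \<Rightarrow> 'c2::complex_vector \<Rightarrow> complex"
    and rO1 :: "'h1 \<Rightarrow> 'o1" and rO2 :: "'h2 \<Rightarrow> 'o2"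
    and rC1 :: "'h1 \<Rightarrow> 'c1" and rC2 :: "'h2 \<Rightarrow> 'c2"
    and Tr1 :: "'h1 \<Rightarrow> 'd1::complex_vector" and Tr2 :: "'h2 \<Rightarrow> 'd2::complex_vector"
    and NO1 :: "'o1 \<Rightarrow> real" and NO2 :: "'o2 \<Rightarrow> real"
    and NC1 :: "'c1 \<Rightarrow> real" and NC2 :: "'c2 \<Rightarrow> real"
    and ND1 :: "'d1 \<Rightarrow> real" and ND2 :: "'d2 \<Rightarrow> real"
    and lam :: real
  assumes seminorms: "seminorm NO1" "seminorm NO2" "seminorm NC1" "seminorm NC2"
      "seminorm ND1" "seminorm ND2"
    and Tr_bdd: "bounded_clinear_into ND1 Tr1" "bounded_clinear_into ND2 Tr2"
    and rO_bdd: "bounded_clinear_into NO1 rO1" "bounded_clinear_into NO2 rO2"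
    and rC_bdd: "bounded_clinear_into NC1 rC1" "bounded_clinear_into NC2 rC2"
    and B_bilin: "bilinear_on UNIV UNIV B" and B_bdd: "bilin_bounded UNIV UNIV norm norm B"
    and BO_bilin: "bilinear_on (range rO1) (range rO2) BO"
    and BO_bdd: "bilin_bounded (range rO1) (range rO2) (qnorm rO1) (qnorm rO2) BO"
    and BC_bilin: "bilinear_on (range rC1) (range rC2) BC"
    and BC_bdd: "bilin_bounded (range rC1) (range rC2) (qnorm rC1) (qnorm rC2) BC"
    and lam_pos: "lam > 0"
    and infsup1: "\<And>v. lam * norm v \<le> (SUP w. cmod (B w v) / norm w)"
    and infsup2: "\<And>u. lam * norm u \<le> (SUP w. cmod (B u w) / norm w)"
    and split: "\<And>u v. B u v = BO (rO1 u) (rO2 v) + BC (rC1 u) (rC2 v)"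
    and glue1: "\<And>\<phi> \<psi>. Tr1 \<phi> = Tr1 \<psi> \<Longrightarrow>
                  \<exists>w. rO1 w = rO1 \<phi> \<and> rC1 w = rC1 \<psi> \<and> Tr1 w = Tr1 \<phi>"
    and glue2: "\<And>\<phi> \<psi>. Tr2 \<phi> = Tr2 \<psi> \<Longrightarrow>
                  \<exists>w. rO2 w = rO2 \<phi> \<and> rC2 w = rC2 \<psi> \<and> Tr2 w = Tr2 \<phi>"
  shows "(\<forall>F G. Tr2 F = Tr2 G \<longrightarrow>
            DB_rep B BO rO1 rO2 F = DB_rep B BO rO1 rO2 G \<and>
            DB_rep B BC rC1 rC2 F = DB_rep B BC rC1 rC2 G)
       \<and> (\<forall>f\<in>range Tr2. \<forall>F. Tr2 F = f \<longrightarrow>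
            qnorm rO2 (DB_rep B BO rO1 rO2 F)
              \<le> bilin_norm (range rC1) (range rC2) (qnorm rC1) (qnorm rC2) BC / lam * qnorm Tr2 f)
       \<and> (\<forall>f\<in>range Tr2. \<forall>F. Tr2 F = f \<longrightarrow>
            qnorm rC2 (DB_rep B BC rC1 rC2 F)
              \<le> bilin_norm (range rO1) (range rO2) (qnorm rO1) (qnorm rO2) BO / lam * qnorm Tr2 f)
       \<and> (\<forall>g. in_dual (range Tr1) (qnorm Tr1) g \<longrightarrow>
            norm (single_layer B Tr1 g) \<le> dual_norm (range Tr1) (qnorm Tr1) g / lam)"
proof -
  have clinear: "clinear rO1" "clinear rO2" "clinear rC1" "clinear rC2" "clinear Tr1"
    using rO_bdd rC_bdd Tr_bdd by (auto simp: bounded_clinear_into_def)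
  interpret inf_sup_form B lam
    by unfold_locales (fact B_bilin B_bdd lam_pos infsup1 infsup2)+
  interpret O: split_form B lam BO rO1 rO2 BC rC1 rC2
    by unfold_locales (fact split clinear BO_bilin BO_bdd BC_bilin BC_bdd)+
  interpret C: split_form B lam BC rC1 rC2 BO rO1 rO2
    by unfold_locales (simp_all add: split clinear BO_bilin BO_bdd BC_bilin BC_bdd)
  have "O.admits_gluing Tr2" and "C.admits_gluing Tr2"
    using glue2 by (metis O.admits_gluing_def C.admits_gluing_def)+
  then show ?thesis
    using O.DB_rep_trace_invariant C.DB_rep_trace_invariant O.qnorm_DB_rep_le C.qnorm_DB_rep_le
      norm_single_layer_le[OF clinear(5)]
    by blast
qed

end
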